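(* Let $k\geq3$. For all $n\geq k$, as an identity of rational functions in $v$, $$G_k(n;v)=f_{k-1}(n-1)+vf_{k-1}(n-2)-v(k-2)f_{k-1}(n-3)+\Bigl(\frac{v^2}{1-v}+(k-2)v\Bigr)G_k(n-2;v)-\frac{v^n}{1-v}\,g_k(n-2)+\frac{v^{n-1}}{1-v}\Bigl(k-2+\frac{v-v^{3-k}}{1-v}\Bigr)g_k(n-4),$$ and $G_k(n;v)=I_{n-1}+\frac{v-v^n}{1-v}I_{n-2}$ for all $n=1,\ldots,k-1$ (for $n=1$ the second term is $0$).
   Context: $\mathcal{A}_k=\{\sigma\in\mathfrak{S}_k:\sigma_1=1,\sigma_2=2\}$, $\mathcal{F}_k=\{\sigma\in\mathfrak{S}_k:\sigma_1=1\}$. $\mathcal{I}_n(T)$ is the set of involutions of $[n]$ avoiding every pattern in $T$; $\mathcal{I}_0(T)$ is the empty permutation. $I_n$ is the number of involutions of $[n]$ ($I_0=1$). $g_k(n)=|\mathcal{I}_n(\mathcal{A}_k)|$ for $n\ge0$ (so $g_k(0)=1$), with the convention $g_k(m)=0$ for $m<0$; $g_k(n;t)=\#\{\pi\in\mathcal{I}_n(\mathcal{A}_k):\pi_1=t\}$; $f_{k-1}(m)=|\mathcal{I}_m(\mathcal{F}_{k-1})|$ ($f_{k-1}(0)=1$). $G_k(n;v)=\sum_{t=1}^n g_k(n;t)v^{t-1}$. *)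

theory Defs
  imports Complex_Main
begin

text \<open>Permutations of [n] are represented in one-line notation as lists:
  the list p represents the permutation with p_(i+1) = p ! i.\<close>

definition perms :: "nat \<Rightarrow> nat list set" where
  "perms n = {p. distinct p \<and> set p = {1..n}}"

definition contains :: "nat list \<Rightarrow> nat list \<Rightarrow> bool" where
  "contains p s \<longleftrightarrow> (\<exists>idx :: nat \<Rightarrow> nat.
      (\<forall>a b. a < b \<and> b < length s \<longrightarrow> idx a < idx b) \<and>
      (\<forall>a < length s. idx a < length p) \<and>
      (\<forall>a < length s. \<forall>b < length s. (p ! idx a < p ! idx b \<longleftrightarrow> s ! a < s ! b)))"

definition avoids :: "nat list \<Rightarrow> nat list set \<Rightarrow> bool" where
  "avoids p T \<longleftrightarrow> (\<forall>s\<in>T. \<not> contains p s)"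

definition involution :: "nat list \<Rightarrow> bool" where
  "involution p \<longleftrightarrow> (\<forall>i < length p. p ! (p ! i - 1) = i + 1)"

definition Acal :: "nat \<Rightarrow> nat list set" where
  "Acal k = {s \<in> perms k. s ! 0 = 1 \<and> s ! 1 = 2}"

definition Fcal :: "nat \<Rightarrow> nat list set" where
  "Fcal k = {s \<in> perms k. s ! 0 = 1}"

definition Ical :: "nat \<Rightarrow> nat list set \<Rightarrow> nat list set" where
  "Ical n T = {p \<in> perms n. involution p \<and> avoids p T}"

definition Inv :: "nat \<Rightarrow> nat" where
  "Inv n = card {p \<in> perms n. involution p}"

definition g :: "nat \<Rightarrow> nat \<Rightarrow> nat" where
  "g k n = card (Ical n (Acal k))"

definition gz :: "nat \<Rightarrow> int \<Rightarrow> nat" where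
  "gz k m = (if m < 0 then 0 else g k (nat m))"

definition gt :: "nat \<Rightarrow> nat \<Rightarrow> nat \<Rightarrow> nat" where
  "gt k n t = card {p \<in> Ical n (Acal k). p ! 0 = t}"

definition f :: "nat \<Rightarrow> nat \<Rightarrow> nat" where
  "f j m = card (Ical m (Fcal j))"

definition G :: "nat \<Rightarrow> nat \<Rightarrow> real \<Rightarrow> real" where
  "G k n v = (\<Sum>t=1..n. real (gt k n t) * v ^ (t - 1))"

end

theory Submission
  imports Defs
begin

text \<open>An involution p of [n] with p_1 = t \<ge> 2 contains the 2-cycle (1 t); deleting it and
  standardising is a bijection onto the involutions of [n-2], and for t = 1 deleting the fixed
  point 1 is a bijection onto those of [n-1]. Call a position an F-head if at least k - 2 larger
  entries follow it. A permutation avoids F_(k-1) iff it has no F-head, and avoids A_k iff no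
  F-head is preceded by a smaller entry. Deleting (1 t) preserves the number of larger later
  entries, so p avoids A_k iff the reduced involution s does and every F-head of s stays, in
  position and value, below t. For t = 1, 2 this yields f_(k-1)(n-1) and f_(k-1)(n-2). For
  t \<ge> 3 one splits by the first entry of s: if at most k - 3 entries exceed it, deleting that
  first cycle of s again is harmless and merely lowers the threshold t by one; otherwise the
  condition only asks that the first entry be below t - 1. Summing the resulting geometric
  series over t gives the functional equation. For n < k no F-head fits, so every involution
  counts.\<close>

lemma card_eq_sum_card_fibres:
  assumes "finite A" "finite T" "\<forall>x\<in>A. h x \<in> T"
  shows "card A = (\<Sum>t\<in>T. card {x\<in>A. h x = t})"
proof -
  have "A = (\<Union>t\<in>T. {x\<in>A. h x = t})" using assms(3) by blast
  moreover have "card (\<Union>t\<in>T. {x\<in>A. h x = t}) = (\<Sum>t\<in>T. card {x\<in>A. h x = t})"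
    by (rule card_UN_disjoint) (use assms(1,2) in auto)
  ultimately show ?thesis by simp
qed

lemma card_filter_bij_betw:
  assumes "bij_betw h A B" "\<forall>x\<in>A. P x \<longleftrightarrow> Q (h x)"
  shows "card {x\<in>A. P x} = card {y\<in>B. Q y}"
proof -
  have "h ` {x\<in>A. P x} = {y\<in>B. Q y}" using assms unfolding bij_betw_def by auto
  moreover have "inj_on h {x\<in>A. P x}"
    using assms(1) unfolding bij_betw_def by (auto intro: inj_on_subset)
  ultimately show ?thesis by (metis card_image)
qed

lemma geometric_sum_shifted:
  fixes v :: "'a::comm_ring_1"
  assumes "1 \<le> c" "c \<le> Suc n"
  shows "(1 - v) * (\<Sum>t=c..n. v^(t-1)) = v^(c-1) - v^n"
proof -
  obtain c' where c': "c = Suc c'" using assms(1) by (cases c) auto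
  show ?thesis
  proof (cases n)
    case (Suc n')
    have sum: "(\<Sum>t=c..n. v^(t-1)) = (\<Sum>i=c'..n'. v^i)"
      unfolding c' Suc sum.shift_bounds_cl_Suc_ivl by simp
    show ?thesis
    proof (cases "c' \<le> n'")
      case True
      thus ?thesis using sum sum_gp_multiplied[OF True, of v] c' Suc by simp
    next
      case False
      hence "c' = Suc n'" using assms(2) c' Suc by simp
      thus ?thesis using sum c' Suc by simp
    qed
  qed (use c' assms in simp)
qed

lemma power_mult_power_int_three_minus:
  fixes v :: "'a::field"
  assumes "v \<noteq> 0" "k \<le> m + 4"
  shows "v^(m+1) * v powi (3 - int k) = v^(m+4-k)"
proof -
  have "int (m+4-k) = int (m+1) + (3 - int k)" using assms(2) by simp
  hence "v^(m+4-k) = v powi (int (m+1) + (3 - int k))" by (metis power_int_of_nat)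
  also have "\<dots> = v powi int (m+1) * v powi (3 - int k)"
    using assms(1) by (rule power_int_add[OF disjI1])
  finally show ?thesis by (simp only: power_int_of_nat)
qed

lemma length_perms: "s \<in> perms k \<Longrightarrow> length s = k"
  unfolding perms_def using distinct_card[of s] by auto

lemma perms_nth_bounds:
  assumes "s \<in> perms k" "a < k"
  shows "1 \<le> s!a \<and> s!a \<le> k"
proof -
  have "s!a \<in> set s" using assms length_perms[OF assms(1)] by (intro nth_mem) auto
  thus ?thesis using assms by (auto simp: perms_def)
qed

lemma perms_nth_eq_iff:
  assumes "s \<in> perms k" "a < k" "b < k"
  shows "s!a = s!b \<longleftrightarrow> a = b"
  using assms length_perms[OF assms(1)] by (auto simp: perms_def nth_eq_iff_index_eq)

lemma contains_standardization:
  assumes dp: "distinct p" and ps: "sorted_wrt (<) ps" "set ps \<subseteq> {..<length p}"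
  defines "s \<equiv> map (\<lambda>x. card {y \<in> set ps. p!y \<le> p!x}) ps"
  shows "s \<in> perms (length ps) \<and> contains p s"
proof -
  define r where "r x = card {y \<in> set ps. p!y \<le> p!x}" for x
  have dps: "distinct ps" using ps(1) strict_sorted_iff by blast
  have val_eq: "p!x = p!y \<Longrightarrow> x = y" if "x \<in> set ps" "y \<in> set ps" for x y
    using that ps(2) dp by (metis subsetD lessThan_iff nth_eq_iff_index_eq)
  have r_less: "r x < r y" if "x \<in> set ps" "y \<in> set ps" "p!x < p!y" for x y
  proof -
    have "{z \<in> set ps. p!z \<le> p!x} \<subseteq> {z \<in> set ps. p!z \<le> p!y}"
      "y \<in> {z \<in> set ps. p!z \<le> p!y} - {z \<in> set ps. p!z \<le> p!x}"
      using that by auto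
    hence "{z \<in> set ps. p!z \<le> p!x} \<subset> {z \<in> set ps. p!z \<le> p!y}" by blast
    thus ?thesis unfolding r_def by (intro psubset_card_mono) auto
  qed
  have r_less_iff: "r x < r y \<longleftrightarrow> p!x < p!y" if "x \<in> set ps" "y \<in> set ps" for x y
    using r_less[OF that] r_less[OF that(2,1)] val_eq[OF that] by (metis less_asym' linorder_neqE_nat)
  have r_bounds: "r x \<in> {1..length ps}" if "x \<in> set ps" for x
  proof -
    have "r x \<le> card (set ps)" unfolding r_def by (intro card_mono) auto
    moreover have "0 < r x" unfolding r_def using that by (subst card_gt_0_iff) auto
    ultimately show ?thesis using distinct_card[OF dps] by simp
  qed
  have "inj_on r (set ps)"
    by (intro inj_onI) (metis r_less_iff val_eq linorder_neqE_nat less_irrefl)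
  hence ds: "distinct s" using dps unfolding s_def r_def[symmetric] by (simp add: distinct_map)
  moreover have "set s \<subseteq> {1..length ps}" using r_bounds unfolding s_def r_def[symmetric] by auto
  moreover have "card (set s) = card {1..length ps}"
    using distinct_card[OF ds] by (simp add: s_def)
  ultimately have "set s = {1..length ps}" by (intro card_subset_eq) simp_all
  hence "s \<in> perms (length ps)" using ds by (simp add: perms_def)
  moreover have "contains p s" unfolding contains_def
  proof (intro exI[of _ "(!) ps"] conjI allI impI)
    fix a b assume "a < b \<and> b < length s"
    thus "ps!a < ps!b" using ps(1) by (simp add: s_def sorted_wrt_nth_less)
  next
    fix a assume "a < length s"
    hence "ps!a \<in> set ps" by (simp add: s_def)
    thus "ps!a < length p" using ps(2) by auto
  next
    fix a b assume "a < length s" "b < length s"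
    thus "p!(ps!a) < p!(ps!b) \<longleftrightarrow> s!a < s!b"
      using r_less_iff[of "ps!a" "ps!b"] by (simp add: s_def r_def[symmetric])
  qed
  ultimately show ?thesis by blast
qed

definition larger_after :: "nat list \<Rightarrow> nat \<Rightarrow> nat" where
  "larger_after p j = card {l. j < l \<and> l < length p \<and> p!j < p!l}"

definition F_head :: "nat \<Rightarrow> nat list \<Rightarrow> nat \<Rightarrow> bool" where
  "F_head k p j \<longleftrightarrow> k - 2 \<le> larger_after p j"

definition F_free :: "nat \<Rightarrow> nat list \<Rightarrow> bool" where
  "F_free k p \<longleftrightarrow> (\<forall>j<length p. \<not> F_head k p j)"

definition A_free :: "nat \<Rightarrow> nat list \<Rightarrow> bool" where
  "A_free k p \<longleftrightarrow> (\<forall>i j. i < j \<and> j < length p \<and> p!i < p!j \<longrightarrow> \<not> F_head k p j)"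

lemma F_free_imp_A_free: "F_free k p \<Longrightarrow> A_free k p"
  unfolding F_free_def A_free_def by auto

lemma larger_after_ge_occurrence:
  assumes mono: "\<forall>a b. a < b \<and> b < L \<longrightarrow> idx a < idx b"
    and rng: "\<forall>a<L. idx a < length p"
    and iso: "\<forall>a<L. \<forall>b<L. p!idx a < p!idx b \<longleftrightarrow> s!a < s!b"
    and tail: "\<forall>b. a < b \<and> b < L \<longrightarrow> s!a < s!b"
  shows "L - Suc a \<le> larger_after p (idx a)"
proof -
  have "inj_on idx {Suc a..<L}"
    using mono by (intro inj_onI) (metis atLeastLessThan_iff linorder_neqE_nat less_irrefl)
  moreover have "idx ` {Suc a..<L} \<subseteq> {l. idx a < l \<and> l < length p \<and> p!idx a < p!l}"
    using mono rng iso tail by auto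
  ultimately have "card {Suc a..<L} \<le> larger_after p (idx a)"
    unfolding larger_after_def by (intro card_inj_on_le) auto
  thus ?thesis by simp
qed

lemma obtain_larger_after_positions:
  assumes "r \<le> larger_after p j"
  obtains ls where "sorted_wrt (<) ls" "length ls = r"
    "\<forall>l\<in>set ls. j < l \<and> l < length p \<and> p!j < p!l"
proof -
  obtain T where T: "T \<subseteq> {l. j < l \<and> l < length p \<and> p!j < p!l}" "card T = r" "finite T"
    using assms unfolding larger_after_def by (rule obtain_subset_with_card_n)
  obtain ls where "sorted_wrt (<) ls" "set ls = T" "length ls = card T"
    using finite_set_strict_sorted[OF T(3)] by blast
  thus ?thesis using that T by auto
qed

lemma A_free_imp_avoids:
  assumes "3 \<le> k" "A_free k p"
  shows "avoids p (Acal k)"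
  unfolding avoids_def
proof (intro ballI notI)
  fix s assume "s \<in> Acal k" and "contains p s"
  hence sp: "s \<in> perms k" and s0: "s!0 = 1" and s1: "s!1 = 2" by (auto simp: Acal_def)
  obtain idx where mono: "\<forall>a b. a < b \<and> b < k \<longrightarrow> idx a < idx b"
    and rng: "\<forall>a<k. idx a < length p"
    and iso: "\<forall>a<k. \<forall>b<k. p!idx a < p!idx b \<longleftrightarrow> s!a < s!b"
    using \<open>contains p s\<close> length_perms[OF sp] unfolding contains_def by auto
  have "s!1 < s!b" if "1 < b" "b < k" for b
    using perms_nth_eq_iff[OF sp, of b 0] perms_nth_eq_iff[OF sp, of b 1] perms_nth_bounds[OF sp]
      that s0 s1 by fastforce
  hence "F_head k p (idx 1)"
    using larger_after_ge_occurrence[OF mono rng iso, of 1] unfolding F_head_def by simp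
  moreover have "idx 0 < idx 1" "idx 1 < length p" "p!idx 0 < p!idx 1"
    using mono rng iso s0 s1 assms(1) by auto
  ultimately show False using assms(2) unfolding A_free_def by blast
qed

lemma F_free_imp_avoids:
  assumes "3 \<le> k" "F_free k p"
  shows "avoids p (Fcal (k-1))"
  unfolding avoids_def
proof (intro ballI notI)
  fix s assume "s \<in> Fcal (k-1)" and "contains p s"
  hence sp: "s \<in> perms (k-1)" and s0: "s!0 = 1" by (auto simp: Fcal_def)
  obtain idx where mono: "\<forall>a b. a < b \<and> b < k-1 \<longrightarrow> idx a < idx b"
    and rng: "\<forall>a<k-1. idx a < length p"
    and iso: "\<forall>a<k-1. \<forall>b<k-1. p!idx a < p!idx b \<longleftrightarrow> s!a < s!b"
    using \<open>contains p s\<close> length_perms[OF sp] unfolding contains_def by auto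
  have "s!0 < s!b" if "0 < b" "b < k-1" for b
    using perms_nth_eq_iff[OF sp, of b 0] perms_nth_bounds[OF sp] that s0 by fastforce
  hence "F_head k p (idx 0)"
    using larger_after_ge_occurrence[OF mono rng iso, of 0] unfolding F_head_def by simp
  moreover have "idx 0 < length p" using rng assms(1) by auto
  ultimately show False using assms(2) unfolding F_free_def by blast
qed

lemma avoids_imp_A_free:
  assumes "3 \<le> k" "distinct p" "avoids p (Acal k)"
  shows "A_free k p"
  unfolding A_free_def
proof (intro allI impI notI)
  fix i j assume ij: "i < j \<and> j < length p \<and> p!i < p!j" and "F_head k p j"
  obtain ls where ls: "sorted_wrt (<) ls" "length ls = k - 2"
      "\<forall>l\<in>set ls. j < l \<and> l < length p \<and> p!j < p!l"
    using \<open>F_head k p j\<close> unfolding F_head_def by (rule obtain_larger_after_positions)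
  define ps where "ps = i # j # ls"
  define s where "s = map (\<lambda>x. card {y \<in> set ps. p!y \<le> p!x}) ps"
  have "sorted_wrt (<) ps" "set ps \<subseteq> {..<length p}"
    using ls ij by (auto simp: ps_def)
  hence "s \<in> perms (length ps) \<and> contains p s"
    unfolding s_def by (rule contains_standardization[OF assms(2)])
  moreover have "length ps = k" using ls(2) assms(1) by (simp add: ps_def)
  ultimately have s: "s \<in> perms k" "contains p s" by auto
  have "{y \<in> set ps. p!y \<le> p!i} = {i}" "{y \<in> set ps. p!y \<le> p!j} = {i, j}"
    using ls ij by (auto simp: ps_def)
  hence "s!0 = 1" "s!1 = 2" using ij by (simp_all add: s_def ps_def)
  hence "s \<in> Acal k" using s by (simp add: Acal_def)
  thus False using assms(3) s unfolding avoids_def by blast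
qed

lemma avoids_imp_F_free:
  assumes "3 \<le> k" "distinct p" "avoids p (Fcal (k-1))"
  shows "F_free k p"
  unfolding F_free_def
proof (intro allI impI notI)
  fix j assume j: "j < length p" and "F_head k p j"
  obtain ls where ls: "sorted_wrt (<) ls" "length ls = k - 2"
      "\<forall>l\<in>set ls. j < l \<and> l < length p \<and> p!j < p!l"
    using \<open>F_head k p j\<close> unfolding F_head_def by (rule obtain_larger_after_positions)
  define ps where "ps = j # ls"
  define s where "s = map (\<lambda>x. card {y \<in> set ps. p!y \<le> p!x}) ps"
  have "sorted_wrt (<) ps" "set ps \<subseteq> {..<length p}"
    using ls j by (auto simp: ps_def)
  hence "s \<in> perms (length ps) \<and> contains p s"
    unfolding s_def by (rule contains_standardization[OF assms(2)])
  moreover have "length ps = k - 1" using ls(2) assms(1) by (simp add: ps_def)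
  ultimately have s: "s \<in> perms (k-1)" "contains p s" by auto
  have "{y \<in> set ps. p!y \<le> p!j} = {j}"
    using ls by (auto simp: ps_def)
  hence "s!0 = 1" by (simp add: s_def ps_def)
  hence "s \<in> Fcal (k-1)" using s by (simp add: Fcal_def)
  thus False using assms(3) s unfolding avoids_def by blast
qed

lemma avoids_Acal_iff: "3 \<le> k \<Longrightarrow> distinct p \<Longrightarrow> avoids p (Acal k) \<longleftrightarrow> A_free k p"
  using avoids_imp_A_free A_free_imp_avoids by blast

lemma avoids_Fcal_iff: "3 \<le> k \<Longrightarrow> distinct p \<Longrightarrow> avoids p (Fcal (k-1)) \<longleftrightarrow> F_free k p"
  using avoids_imp_F_free F_free_imp_avoids by blast

definition invol :: "nat \<Rightarrow> nat list \<Rightarrow> bool" where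
  "invol n p \<longleftrightarrow>
     length p = n \<and> (\<forall>i<n. 1 \<le> p!i \<and> p!i \<le> n) \<and> (\<forall>i<n. p!(p!i - 1) = i + 1)"

lemma invol_length: "invol n p \<Longrightarrow> length p = n"
  unfolding invol_def by blast

lemma invol_nth_bounds: "invol n p \<Longrightarrow> i < n \<Longrightarrow> 1 \<le> p!i \<and> p!i \<le> n"
  unfolding invol_def by blast

lemma invol_nth_nth: "invol n p \<Longrightarrow> i < n \<Longrightarrow> p!(p!i - 1) = i + 1"
  unfolding invol_def by blast

lemma invol_nth_inj: "invol n p \<Longrightarrow> i < n \<Longrightarrow> j < n \<Longrightarrow> p!i = p!j \<Longrightarrow> i = j"
  unfolding invol_def by (metis add_right_cancel)

lemma invol_iff: "p \<in> perms n \<and> involution p \<longleftrightarrow> invol n p"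
proof
  assume h: "p \<in> perms n \<and> involution p"
  thus "invol n p"
    using length_perms[of p n] perms_nth_bounds[of p n] by (auto simp: invol_def involution_def)
next
  assume h: "invol n p"
  have l: "length p = n" using invol_length[OF h] .
  have d: "distinct p" unfolding distinct_conv_nth using invol_nth_inj[OF h] l by auto
  have "set p \<subseteq> {1..n}" using invol_nth_bounds[OF h] l by (auto simp: in_set_conv_nth)
  moreover have "card (set p) = card {1..n}" using distinct_card[OF d] l by simp
  ultimately have "set p = {1..n}" by (intro card_subset_eq) simp_all
  thus "p \<in> perms n \<and> involution p" using d h l by (auto simp: perms_def involution_def invol_def)
qed

lemma invol_distinct: "invol n p \<Longrightarrow> distinct p"
  using invol_iff[of p n] by (simp add: perms_def)

lemma finite_invol: "finite {p. invol n p}"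
proof (rule finite_subset)
  show "{p. invol n p} \<subseteq> {xs. set xs \<subseteq> {0..n} \<and> length xs = n}"
    using invol_nth_bounds invol_length by (fastforce simp: in_set_conv_nth)
qed (rule finite_lists_length_eq, simp)

lemma Ical_Acal_eq: "3 \<le> k \<Longrightarrow> Ical n (Acal k) = {p. invol n p \<and> A_free k p}"
  unfolding Ical_def using invol_iff avoids_Acal_iff invol_distinct by blast

lemma Ical_Fcal_eq: "3 \<le> k \<Longrightarrow> Ical n (Fcal (k-1)) = {p. invol n p \<and> F_free k p}"
  unfolding Ical_def using invol_iff avoids_Fcal_iff invol_distinct by blast

lemma Inv_eq_card: "Inv n = card {p. invol n p}"
  unfolding Inv_def using invol_iff by (metis (mono_tags, lifting) Collect_cong mem_Collect_eq)

lemma g_eq_card: "3 \<le> k \<Longrightarrow> g k n = card {p. invol n p \<and> A_free k p}"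
  unfolding g_def by (simp add: Ical_Acal_eq)

lemma gt_eq_card: "3 \<le> k \<Longrightarrow> gt k n t = card {p. invol n p \<and> A_free k p \<and> p!0 = t}"
  unfolding gt_def by (simp add: Ical_Acal_eq conj_assoc)

lemma f_eq_card: "3 \<le> k \<Longrightarrow> f (k-1) n = card {p. invol n p \<and> F_free k p}"
  unfolding f_def using Ical_Fcal_eq by metis

text \<open>Deleting the 2-cycle (1 t) from an involution: lift_pos/drop_pos translate 0-based positions
  of the reduced list to those of the full one (skipping 0 and t - 1), lift_val/drop_val do the
  same for values (skipping 1 and t).\<close>

definition lift_pos :: "nat \<Rightarrow> nat \<Rightarrow> nat" where
  "lift_pos t j = (if j + 3 \<le> t then j + 1 else j + 2)"

definition drop_pos :: "nat \<Rightarrow> nat \<Rightarrow> nat" where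
  "drop_pos t l = (if l < t then l - 1 else l - 2)"

definition lift_val :: "nat \<Rightarrow> nat \<Rightarrow> nat" where
  "lift_val t x = (if x + 2 \<le> t then x + 1 else x + 2)"

definition drop_val :: "nat \<Rightarrow> nat \<Rightarrow> nat" where
  "drop_val t y = (if y \<le> t then y - 1 else y - 2)"

definition remove_cycle :: "nat \<Rightarrow> nat list \<Rightarrow> nat list" where
  "remove_cycle t p = map (\<lambda>j. drop_val t (p ! lift_pos t j)) [0..<length p - 2]"

definition insert_cycle :: "nat \<Rightarrow> nat list \<Rightarrow> nat list" where
  "insert_cycle t s = map (\<lambda>i. if i = 0 then t else if i = t - 1 then 1
                                else lift_val t (s ! drop_pos t i)) [0..<length s + 2]"

text \<open>Inserting the cycle (1 t) into s creates no occurrence of a pattern of A_k iff every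
  F-head of s ends up left of position t - 1 with a value below t.\<close>

definition cycle_ok :: "nat \<Rightarrow> nat \<Rightarrow> nat list \<Rightarrow> bool" where
  "cycle_ok k t s \<longleftrightarrow> (\<forall>j<length s. F_head k s j \<longrightarrow> s!j + 2 \<le> t \<and> j + 3 \<le> t)"

lemma lift_pos_drop_val:
  "2 \<le> t \<Longrightarrow> 2 \<le> y \<Longrightarrow> y \<noteq> t \<Longrightarrow> lift_pos t (drop_val t y - 1) = y - 1"
  unfolding lift_pos_def drop_val_def by (simp split: if_splits; linarith)

lemma drop_val_lift_pos: "drop_val t (lift_pos t j + 1) = j + 1"
  unfolding lift_pos_def drop_val_def by (simp split: if_splits; linarith)

lemma lift_drop_val: "2 \<le> y \<Longrightarrow> y \<noteq> t \<Longrightarrow> lift_val t (drop_val t y) = y"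
  unfolding lift_val_def drop_val_def by (simp split: if_splits; linarith)

lemma drop_lift_val: "drop_val t (lift_val t x) = x"
  unfolding lift_val_def drop_val_def by (simp split: if_splits; linarith)

lemma drop_lift_pos: "drop_pos t (lift_pos t j) = j"
  unfolding lift_pos_def drop_pos_def by (simp split: if_splits; linarith)

lemma lift_drop_pos: "2 \<le> t \<Longrightarrow> l \<noteq> 0 \<Longrightarrow> l \<noteq> t - 1 \<Longrightarrow> lift_pos t (drop_pos t l) = l"
  unfolding lift_pos_def drop_pos_def by (simp split: if_splits; linarith)

lemma lift_pos_less_iff: "lift_pos t j < lift_pos t j' \<longleftrightarrow> j < j'"
  unfolding lift_pos_def by (simp split: if_splits; linarith)

lemma lift_val_less_iff: "lift_val t x < lift_val t x' \<longleftrightarrow> x < x'"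
  unfolding lift_val_def by (simp split: if_splits; linarith)

lemma lift_pos_ne: "2 \<le> t \<Longrightarrow> lift_pos t j \<noteq> 0 \<and> lift_pos t j \<noteq> t - 1"
  unfolding lift_pos_def by (simp split: if_splits; linarith)

lemma lift_val_ne: "1 \<le> x \<Longrightarrow> lift_val t x \<noteq> 1 \<and> lift_val t x \<noteq> t \<and> 2 \<le> lift_val t x"
  unfolding lift_val_def by (simp split: if_splits; linarith)

lemma drop_pos_lift_val: "1 \<le> x \<Longrightarrow> drop_pos t (lift_val t x - 1) = x - 1"
  unfolding lift_val_def drop_pos_def by (simp split: if_splits; linarith)

lemma lift_val_drop_pos:
  "2 \<le> t \<Longrightarrow> i \<noteq> 0 \<Longrightarrow> i \<noteq> t - 1 \<Longrightarrow> lift_val t (drop_pos t i + 1) = i + 1"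
  unfolding lift_val_def drop_pos_def by (simp split: if_splits; linarith)

lemma insert_cycle_nth: "i < length s + 2 \<Longrightarrow>
  insert_cycle t s ! i = (if i = 0 then t else if i = t - 1 then 1 else lift_val t (s ! drop_pos t i))"
  unfolding insert_cycle_def by (simp del: upt_Suc)

lemma length_insert_cycle: "length (insert_cycle t s) = length s + 2"
  unfolding insert_cycle_def by (simp del: upt_Suc)

lemma drop_pos_less:
  "2 \<le> t \<Longrightarrow> t \<le> n \<Longrightarrow> l < n \<Longrightarrow> l \<noteq> 0 \<Longrightarrow> l \<noteq> t - 1 \<Longrightarrow> drop_pos t l < n - 2"
  unfolding drop_pos_def by auto

locale first_cycle =
  fixes n t :: nat and p :: "nat list"
  assumes ip: "invol n p" and p0: "p!0 = t" and t2: "2 \<le> t" and tn: "t \<le> n"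
begin

lemma length_p: "length p = n"
  using invol_length[OF ip] .

lemma p_last: "p!(t-1) = 1"
  using invol_nth_nth[OF ip, of 0] p0 t2 tn by simp

lemma p_other:
  assumes "l < n" "l \<noteq> 0" "l \<noteq> t - 1"
  shows "p!l \<noteq> 1 \<and> p!l \<noteq> t \<and> 2 \<le> p!l"
proof -
  have "t - 1 < n" using t2 tn by simp
  hence "p!l \<noteq> 1" using invol_nth_inj[OF ip, of l "t-1"] assms p_last by auto
  moreover have "p!l \<noteq> t" using invol_nth_inj[OF ip, of l 0] assms p0 t2 tn by auto
  moreover have "1 \<le> p!l" using invol_nth_bounds[OF ip] assms by blast
  ultimately show ?thesis by linarith
qed

lemma lift_pos_less: "j < n - 2 \<Longrightarrow> lift_pos t j < n"
  unfolding lift_pos_def by auto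

lemma p_lift_pos:
  "j < n - 2 \<Longrightarrow> p!lift_pos t j \<noteq> 1 \<and> p!lift_pos t j \<noteq> t \<and> 2 \<le> p!lift_pos t j"
  using p_other lift_pos_less lift_pos_ne[OF t2] by blast

lemma obtain_lift_pos:
  assumes "l < n" "l \<noteq> 0" "l \<noteq> t - 1"
  obtains j where "j < n - 2" "l = lift_pos t j"
  by (rule that[of "drop_pos t l"]) (simp_all add: drop_pos_less[OF t2 tn assms] lift_drop_pos[OF t2 assms(2,3)])

lemma position_cases:
  assumes "l < n"
  obtains "l = 0" | "l = t - 1" | j where "j < n - 2" "l = lift_pos t j"
  using obtain_lift_pos[OF assms] by blast

lemma length_remove_cycle: "length (remove_cycle t p) = n - 2"
  by (simp add: remove_cycle_def length_p)

lemma remove_cycle_nth: "j < n - 2 \<Longrightarrow> remove_cycle t p ! j = drop_val t (p ! lift_pos t j)"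
  by (simp add: remove_cycle_def length_p)

lemma nth_lift_pos:
  assumes "j < n - 2"
  shows "p ! lift_pos t j = lift_val t (remove_cycle t p ! j)"
  using p_lift_pos[OF assms] remove_cycle_nth[OF assms] lift_drop_val
  by simp

lemma invol_remove_cycle: "invol (n-2) (remove_cycle t p)"
  unfolding invol_def
proof (intro conjI allI impI)
  show "length (remove_cycle t p) = n - 2" by (rule length_remove_cycle)
  fix j assume j: "j < n - 2"
  define y where "y = p ! lift_pos t j"
  have y: "y \<noteq> 1 \<and> y \<noteq> t \<and> 2 \<le> y" "y \<le> n"
    unfolding y_def using p_lift_pos[OF j] invol_nth_bounds[OF ip lift_pos_less[OF j]] by auto
  have r: "remove_cycle t p ! j = drop_val t y" using remove_cycle_nth[OF j] y_def by simp
  show "1 \<le> remove_cycle t p ! j" "remove_cycle t p ! j \<le> n - 2"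
    using r y t2 tn unfolding drop_val_def by auto
  have lt: "drop_val t y - 1 < n - 2" using y t2 tn unfolding drop_val_def by auto
  have "remove_cycle t p ! (remove_cycle t p ! j - 1) = drop_val t (p ! lift_pos t (drop_val t y - 1))"
    using remove_cycle_nth[OF lt] r by simp
  also have "\<dots> = drop_val t (p ! (y - 1))" using lift_pos_drop_val[OF t2, of y] y by simp
  also have "\<dots> = drop_val t (lift_pos t j + 1)" using invol_nth_nth[OF ip lift_pos_less[OF j]] y_def by simp
  also have "\<dots> = j + 1" by (rule drop_val_lift_pos)
  finally show "remove_cycle t p ! (remove_cycle t p ! j - 1) = j + 1" .
qed

lemma insert_remove_cycle: "insert_cycle t (remove_cycle t p) = p"
proof (rule nth_equalityI)
  have n2: "2 \<le> n" using t2 tn by simp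
  show len: "length (insert_cycle t (remove_cycle t p)) = length p"
    using length_remove_cycle length_p n2 by (simp add: length_insert_cycle)
  fix i assume "i < length (insert_cycle t (remove_cycle t p))"
  hence i: "i < n" using len length_p by simp
  show "insert_cycle t (remove_cycle t p) ! i = p ! i"
    using i
  proof (cases rule: position_cases)
    case (3 j)
    have "lift_pos t j \<noteq> 0 \<and> lift_pos t j \<noteq> t - 1" using lift_pos_ne[OF t2] .
    thus ?thesis using 3 i length_remove_cycle nth_lift_pos[OF 3(1)]
      by (simp add: insert_cycle_nth drop_lift_pos)
  qed (use i p0 p_last length_remove_cycle n2 in \<open>auto simp: insert_cycle_nth\<close>)
qed

lemma larger_after_remove_cycle:
  assumes j: "j < n - 2"
  shows "larger_after (remove_cycle t p) j = larger_after p (lift_pos t j)"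
proof -
  let ?s = "remove_cycle t p"
  let ?S = "{i. j < i \<and> i < length ?s \<and> ?s!j < ?s!i}"
  have lifted: "lift_pos t j < lift_pos t i \<and> lift_pos t i < length p
      \<and> p!lift_pos t j < p!lift_pos t i \<longleftrightarrow> i \<in> ?S" if "i < n - 2" for i
    using that j nth_lift_pos lift_pos_less length_p length_remove_cycle
    by (simp add: lift_pos_less_iff lift_val_less_iff)
  have "{l. lift_pos t j < l \<and> l < length p \<and> p!lift_pos t j < p!l} = lift_pos t ` ?S"
  proof (intro set_eqI iffI)
    fix l assume l: "l \<in> {l. lift_pos t j < l \<and> l < length p \<and> p!lift_pos t j < p!l}"
    have "p!l \<noteq> 1" using l p_lift_pos[OF j] by auto
    hence lt: "l \<noteq> t - 1" using p_last by auto
    have ln: "l < n" "l \<noteq> 0" using l length_p by auto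
    obtain i where i: "i < n - 2" "l = lift_pos t i"
      by (rule obtain_lift_pos[OF ln lt])
    hence "i \<in> ?S" using lifted[OF i(1)] l by simp
    thus "l \<in> lift_pos t ` ?S" using i(2) by blast
  next
    fix l assume "l \<in> lift_pos t ` ?S"
    then obtain i where i: "i \<in> ?S" "l = lift_pos t i" by blast
    hence "i < n - 2" using length_remove_cycle by simp
    thus "l \<in> {l. lift_pos t j < l \<and> l < length p \<and> p!lift_pos t j < p!l}"
      using lifted i by simp
  qed
  moreover have "inj_on (lift_pos t) ?S"
    by (intro inj_onI) (simp add: lift_pos_def split: if_splits)
  ultimately show ?thesis unfolding larger_after_def by (simp add: card_image)
qed

lemma F_head_remove_cycle:
  "j < n - 2 \<Longrightarrow> F_head k (remove_cycle t p) j \<longleftrightarrow> F_head k p (lift_pos t j)"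
  unfolding F_head_def using larger_after_remove_cycle by simp

lemma A_free_imp_remove_cycle:
  assumes av: "A_free k p"
  shows "A_free k (remove_cycle t p) \<and> cycle_ok k t (remove_cycle t p)"
proof
  let ?s = "remove_cycle t p"
  have head: "F_head k p (lift_pos t j)" "lift_pos t j < length p"
    if "j < length ?s" "F_head k ?s j" for j
    using that F_head_remove_cycle lift_pos_less length_p length_remove_cycle by auto
  show "A_free k ?s" unfolding A_free_def
  proof (intro allI impI notI)
    fix i j assume h: "i < j \<and> j < length ?s \<and> ?s!i < ?s!j" and "F_head k ?s j"
    moreover have "lift_pos t i < lift_pos t j" "p!lift_pos t i < p!lift_pos t j"
      using h nth_lift_pos length_remove_cycle lift_pos_less_iff lift_val_less_iff by auto
    ultimately show False using av head unfolding A_free_def by blast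
  qed
  show "cycle_ok k t ?s" unfolding cycle_ok_def
  proof (intro allI impI)
    fix j assume j: "j < length ?s" and b: "F_head k ?s j"
    have v: "p!lift_pos t j = lift_val t (?s!j)" using nth_lift_pos j length_remove_cycle by simp
    have "1 \<le> ?s!j" using invol_nth_bounds[OF invol_remove_cycle] j length_remove_cycle by simp
    hence "p!(t-1) < p!lift_pos t j" using v p_last lift_val_ne[of "?s!j" t] by simp
    hence "\<not> t - 1 < lift_pos t j" using av head[OF j b] unfolding A_free_def by blast
    moreover have "\<not> p!0 < p!lift_pos t j" using av head[OF j b] lift_pos_ne[OF t2]
      unfolding A_free_def by blast
    ultimately show "?s!j + 2 \<le> t \<and> j + 3 \<le> t"
      using v p0 unfolding lift_pos_def lift_val_def by (auto split: if_splits)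
  qed
qed

lemma A_free_if_remove_cycle:
  assumes av: "A_free k (remove_cycle t p)" and ok: "cycle_ok k t (remove_cycle t p)"
  shows "A_free k p"
  unfolding A_free_def
proof (intro allI impI notI)
  let ?s = "remove_cycle t p"
  fix i j assume h: "i < j \<and> j < length p \<and> p!i < p!j" and b: "F_head k p j"
  have "1 \<le> p!i" using invol_nth_bounds[OF ip] h length_p by simp
  hence jt: "j \<noteq> t - 1" using p_last h by auto
  have jn: "j < n" "j \<noteq> 0" using h length_p by auto
  obtain j' where j': "j' < n - 2" "j = lift_pos t j'"
    by (rule obtain_lift_pos[OF jn jt])
  have bs: "F_head k ?s j'" using F_head_remove_cycle[OF j'(1)] j' b by simp
  have v: "p!j = lift_val t (?s!j')" using nth_lift_pos[OF j'(1)] j' by simp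
  have okj: "?s!j' + 2 \<le> t \<and> j' + 3 \<le> t"
    using ok bs j' length_remove_cycle unfolding cycle_ok_def by simp
  have "i < n" using h length_p by simp
  thus False
  proof (cases rule: position_cases)
    case 1 thus False using h p0 v okj unfolding lift_val_def by auto
  next
    case 2 thus False using h j' okj unfolding lift_pos_def by auto
  next
    case (3 i')
    hence "i' < j'" "?s!i' < ?s!j'"
      using h j' v nth_lift_pos lift_pos_less_iff lift_val_less_iff by auto
    thus False using av bs j' length_remove_cycle unfolding A_free_def by auto
  qed
qed

lemma A_free_remove_cycle_iff:
  "A_free k p \<longleftrightarrow> A_free k (remove_cycle t p) \<and> cycle_ok k t (remove_cycle t p)"
  using A_free_imp_remove_cycle A_free_if_remove_cycle by blast

end

lemma insert_cycle_nth_cases: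
  assumes "invol (n-2) s" "2 \<le> t" "t \<le> n" "i < n"
  shows "insert_cycle t s ! i = (if i = 0 then t else if i = t - 1 then 1
           else lift_val t (s ! drop_pos t i))"
  using assms invol_length[OF assms(1)] by (simp add: insert_cycle_nth)

lemma insert_cycle_nth_bounds:
  assumes hs: "invol (n-2) s" and t2: "2 \<le> t" and tn: "t \<le> n" and i: "i < n"
  shows "1 \<le> insert_cycle t s ! i \<and> insert_cycle t s ! i \<le> n"
proof (cases "i = 0 \<or> i = t - 1")
  case False
  hence "1 \<le> s ! drop_pos t i \<and> s ! drop_pos t i \<le> n - 2"
    using invol_nth_bounds[OF hs drop_pos_less[OF t2 tn i]] by blast
  thus ?thesis using insert_cycle_nth_cases[OF hs t2 tn i] False unfolding lift_val_def by auto
qed (use insert_cycle_nth_cases[OF hs t2 tn i] t2 tn in auto)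

lemma insert_cycle_nth_nth:
  assumes hs: "invol (n-2) s" and t2: "2 \<le> t" and tn: "t \<le> n" and i: "i < n"
  shows "insert_cycle t s ! (insert_cycle t s ! i - 1) = i + 1"
proof -
  note nth = insert_cycle_nth_cases[OF hs t2 tn]
  consider "i = 0" | "i = t - 1" "i \<noteq> 0" | "i \<noteq> 0" "i \<noteq> t - 1" by blast
  thus ?thesis
  proof cases
    case 3
    define x where "x = s ! drop_pos t i"
    have u: "drop_pos t i < n - 2" using drop_pos_less[OF t2 tn i 3] .
    have x: "1 \<le> x \<and> x \<le> n - 2" using invol_nth_bounds[OF hs u] x_def by blast
    have "lift_val t x - 1 < n" "lift_val t x - 1 \<noteq> 0" "lift_val t x - 1 \<noteq> t - 1"
      using x lift_val_ne[of x t] t2 unfolding lift_val_def by auto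
    hence "insert_cycle t s ! (lift_val t x - 1) = lift_val t (s ! drop_pos t (lift_val t x - 1))"
      using nth by simp
    also have "\<dots> = lift_val t (s ! (x - 1))" using drop_pos_lift_val x by simp
    also have "\<dots> = lift_val t (drop_pos t i + 1)" using invol_nth_nth[OF hs u] x_def by simp
    also have "\<dots> = i + 1" using lift_val_drop_pos[OF t2 3] .
    finally show ?thesis using nth[OF i] 3 x_def by simp
  qed (use nth[OF i] nth[of 0] nth[of "t-1"] t2 tn in auto)
qed

lemma invol_insert_cycle:
  assumes "invol (n-2) s" "2 \<le> t" "t \<le> n"
  shows "invol n (insert_cycle t s) \<and> insert_cycle t s ! 0 = t"
  using insert_cycle_nth_bounds[OF assms] insert_cycle_nth_nth[OF assms]
    insert_cycle_nth_cases[OF assms, of 0] invol_length[OF assms(1)] assms(2,3)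
  by (simp add: invol_def length_insert_cycle)

lemma remove_insert_cycle:
  assumes t2: "2 \<le> t" shows "remove_cycle t (insert_cycle t s) = s"
proof (rule nth_equalityI)
  show "length (remove_cycle t (insert_cycle t s)) = length s"
    by (simp add: remove_cycle_def length_insert_cycle)
  fix j assume "j < length (remove_cycle t (insert_cycle t s))"
  hence j: "j < length s" by (simp add: remove_cycle_def length_insert_cycle)
  have pl: "lift_pos t j < length s + 2" unfolding lift_pos_def using j by simp
  have ne: "lift_pos t j \<noteq> 0 \<and> lift_pos t j \<noteq> t - 1" using lift_pos_ne[OF t2] .
  have "remove_cycle t (insert_cycle t s) ! j = drop_val t (insert_cycle t s ! lift_pos t j)"
    using j by (simp add: remove_cycle_def length_insert_cycle)
  also have "\<dots> = drop_val t (lift_val t (s ! drop_pos t (lift_pos t j)))"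
    using pl ne by (simp add: insert_cycle_nth)
  also have "\<dots> = s ! j" by (simp add: drop_lift_val drop_lift_pos)
  finally show "remove_cycle t (insert_cycle t s) ! j = s ! j" .
qed

lemma remove_cycle_bij:
  assumes t2: "2 \<le> t" and tn: "t \<le> n"
  shows "bij_betw (remove_cycle t) {p. invol n p \<and> p!0 = t} {s. invol (n-2) s}"
proof (rule bij_betw_byWitness[where f' = "insert_cycle t"])
  show "\<forall>a\<in>{p. invol n p \<and> p ! 0 = t}. insert_cycle t (remove_cycle t a) = a"
    using first_cycle.insert_remove_cycle first_cycle.intro t2 tn by blast
  show "\<forall>a'\<in>{s. invol (n - 2) s}. remove_cycle t (insert_cycle t a') = a'"
    using remove_insert_cycle[OF t2] by blast
  show "remove_cycle t ` {p. invol n p \<and> p ! 0 = t} \<subseteq> {s. invol (n - 2) s}"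
    using first_cycle.invol_remove_cycle first_cycle.intro t2 tn by blast
  show "insert_cycle t ` {s. invol (n - 2) s} \<subseteq> {p. invol n p \<and> p ! 0 = t}"
    using invol_insert_cycle t2 tn by blast
qed

lemma larger_after_Cons_map_Suc:
  assumes "j < length s"
  shows "larger_after (x # map Suc s) (Suc j) = larger_after s j"
proof -
  have "{l. Suc j < l \<and> l < length (x # map Suc s) \<and> (x # map Suc s)!Suc j < (x # map Suc s)!l}
      = Suc ` {l. j < l \<and> l < length s \<and> s!j < s!l}" (is "?L = Suc ` ?R")
  proof (intro set_eqI iffI)
    fix l assume l: "l \<in> ?L"
    then obtain l' where "l = Suc l'" by (cases l) auto
    thus "l \<in> Suc ` ?R" using l assms by auto
  qed (use assms in auto)
  thus ?thesis unfolding larger_after_def by (simp add: card_image)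
qed

lemma invol_Cons_one_iff: "invol (Suc m) (1 # map Suc s) \<longleftrightarrow> invol m s"
proof
  assume h: "invol (Suc m) (1 # map Suc s)"
  have len: "length s = m" using invol_length[OF h] by simp
  have "1 \<le> s!i \<and> s!i \<le> m \<and> s!(s!i - 1) = i + 1" if "i < m" for i
  proof -
    have e: "(1 # map Suc s)!(s!i) = i + 2" using invol_nth_nth[OF h, of "Suc i"] that len by simp
    hence "s!i \<noteq> 0" by (cases "s!i") auto
    moreover have "s!i \<le> m" using invol_nth_bounds[OF h, of "Suc i"] that len by simp
    ultimately show ?thesis using e len by (cases "s!i") auto
  qed
  thus "invol m s" using len by (simp add: invol_def)
next
  assume h: "invol m s"
  have "(1 # map Suc s)!((1 # map Suc s)!i - 1) = i + 1
      \<and> 1 \<le> (1 # map Suc s)!i \<and> (1 # map Suc s)!i \<le> Suc m" if i: "i < Suc m" for i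
  proof (cases i)
    case (Suc i')
    moreover obtain x where "s!i' = Suc x" using invol_nth_bounds[OF h, of i'] Suc i
      by (cases "s!i'") auto
    ultimately show ?thesis
      using invol_nth_nth[OF h, of i'] invol_nth_bounds[OF h, of i'] invol_length[OF h] i by auto
  qed (use invol_length[OF h] in simp)
  thus "invol (Suc m) (1 # map Suc s)" using invol_length[OF h] by (simp add: invol_def)
qed

lemma first_fixed_point_bij:
  "bij_betw (\<lambda>s. 1 # map Suc s) {s. invol m s} {p. invol (Suc m) p \<and> p!0 = 1}"
proof (rule bij_betw_imageI)
  show "inj_on (\<lambda>s. 1 # map Suc s) {s. invol m s}" by (auto intro: inj_onI)
  show "(\<lambda>s. 1 # map Suc s) ` {s. invol m s} = {p. invol (Suc m) p \<and> p!0 = 1}"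
  proof (intro set_eqI iffI)
    fix p assume "p \<in> {p. invol (Suc m) p \<and> p!0 = 1}"
    hence p: "invol (Suc m) p" "p!0 = 1" by auto
    have "p!l \<noteq> 1" if "0 < l" "l < Suc m" for l
      using invol_nth_inj[OF p(1), of l 0] p(2) that by auto
    hence "\<forall>x\<in>set (tl p). 2 \<le> x"
      using invol_nth_bounds[OF p(1)] invol_length[OF p(1)] by (fastforce simp: in_set_conv_nth nth_tl)
    hence "map Suc (map (\<lambda>x. x - 1) (tl p)) = tl p"
      unfolding map_map by (intro map_idI) auto
    hence "p = 1 # map Suc (map (\<lambda>x. x - 1) (tl p))"
      using p invol_length[OF p(1)] by (cases p) auto
    moreover hence "invol m (map (\<lambda>x. x - 1) (tl p))" using invol_Cons_one_iff p(1) by metis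
    ultimately show "p \<in> (\<lambda>s. 1 # map Suc s) ` {s. invol m s}" by blast
  qed (use invol_Cons_one_iff in force)
qed

lemma A_free_Cons_one_iff:
  assumes "invol m s"
  shows "A_free k (1 # map Suc s) \<longleftrightarrow> F_free k s"
proof
  assume av: "A_free k (1 # map Suc s)"
  show "F_free k s" unfolding F_free_def
  proof (intro allI impI notI)
    fix j assume j: "j < length s" and "F_head k s j"
    hence "F_head k (1 # map Suc s) (Suc j)"
      unfolding F_head_def by (simp add: larger_after_Cons_map_Suc)
    moreover have "1 < Suc (s!j)" using invol_nth_bounds[OF assms, of j] invol_length[OF assms] j by simp
    ultimately show False using av j unfolding A_free_def by fastforce
  qed
next
  assume fr: "F_free k s"
  show "A_free k (1 # map Suc s)" unfolding A_free_def
  proof (intro allI impI notI)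
    fix i j assume h: "i < j \<and> j < length (1 # map Suc s) \<and> (1 # map Suc s)!i < (1 # map Suc s)!j"
      and b: "F_head k (1 # map Suc s) j"
    then obtain j' where j': "j = Suc j'" "j' < length s" by (cases j) auto
    hence "F_head k s j'" using b unfolding F_head_def by (simp add: larger_after_Cons_map_Suc)
    thus False using fr j' unfolding F_free_def by blast
  qed
qed

lemma gt_one:
  assumes "3 \<le> k"
  shows "gt k (Suc m) 1 = f (k-1) m"
proof -
  have "{p. invol (Suc m) p \<and> A_free k p \<and> p!0 = 1}
      = {p \<in> {p. invol (Suc m) p \<and> p!0 = 1}. A_free k p}" by blast
  hence "gt k (Suc m) 1 = card {p \<in> {p. invol (Suc m) p \<and> p!0 = 1}. A_free k p}"
    using gt_eq_card[OF assms] by simp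
  also have "\<dots> = card {s \<in> {s. invol m s}. F_free k s}"
    by (rule card_filter_bij_betw[OF first_fixed_point_bij, symmetric]) (use A_free_Cons_one_iff in blast)
  finally show ?thesis using f_eq_card[OF assms] by simp
qed

lemma gt_eq_card_cycle_ok:
  assumes k3: "3 \<le> k" and t2: "2 \<le> t" and tn: "t \<le> n"
  shows "gt k n t = card {s. invol (n-2) s \<and> A_free k s \<and> cycle_ok k t s}"
proof -
  have "{p. invol n p \<and> A_free k p \<and> p!0 = t} = {p \<in> {p. invol n p \<and> p!0 = t}. A_free k p}"
    by blast
  hence "gt k n t = card {p \<in> {p. invol n p \<and> p!0 = t}. A_free k p}"
    using gt_eq_card[OF k3] by simp
  also have "\<dots> = card {s \<in> {s. invol (n-2) s}. A_free k s \<and> cycle_ok k t s}"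
    using first_cycle.A_free_remove_cycle_iff first_cycle.intro t2 tn
    by (intro card_filter_bij_betw[OF remove_cycle_bij[OF t2 tn]]) blast
  finally show ?thesis by simp
qed

lemma cycle_ok_two_iff:
  assumes "invol m s"
  shows "cycle_ok k 2 s \<longleftrightarrow> F_free k s"
  using invol_nth_bounds[OF assms] invol_length[OF assms]
  unfolding cycle_ok_def F_free_def by fastforce

lemma gt_two:
  assumes "3 \<le> k" "2 \<le> n"
  shows "gt k n 2 = f (k-1) (n-2)"
proof -
  have "{s. invol (n-2) s \<and> A_free k s \<and> cycle_ok k 2 s} = {s. invol (n-2) s \<and> F_free k s}"
    using cycle_ok_two_iff F_free_imp_A_free by blast
  thus ?thesis using gt_eq_card_cycle_ok[OF assms(1) _ assms(2)] f_eq_card[OF assms(1)] by simp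
qed

lemma larger_after_le_pos: "j < length s \<Longrightarrow> larger_after s j + j + 1 \<le> length s"
proof -
  assume j: "j < length s"
  have "larger_after s j \<le> card {j+1..<length s}"
    unfolding larger_after_def by (intro card_mono) auto
  thus ?thesis using j by simp
qed

lemma larger_after_le_val:
  assumes ip: "invol m s" and j: "j < m"
  shows "larger_after s j + s!j \<le> m"
proof -
  let ?S = "{l. j < l \<and> l < length s \<and> s!j < s!l}"
  have "inj_on ((!) s) ?S"
    using invol_nth_inj[OF ip] invol_length[OF ip] by (intro inj_onI) auto
  moreover have "(!) s ` ?S \<subseteq> {s!j+1..m}"
    using invol_nth_bounds[OF ip] invol_length[OF ip] by auto
  ultimately have "larger_after s j \<le> card {s!j+1..m}"
    unfolding larger_after_def by (intro card_inj_on_le) auto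
  hence "larger_after s j \<le> m - s!j" by simp
  thus ?thesis using invol_nth_bounds[OF ip j] by linarith
qed

lemma not_F_head_short: "length s + 2 \<le> k \<Longrightarrow> j < length s \<Longrightarrow> \<not> F_head k s j"
  using larger_after_le_pos[of j s] unfolding F_head_def by simp

lemma larger_after_first:
  assumes ip: "invol m s" and m1: "1 \<le> m"
  shows "larger_after s 0 = m - s!0"
proof -
  let ?S = "{l. 0 < l \<and> l < length s \<and> s!0 < s!l}"
  have ls: "length s = m" using invol_length[OF ip] .
  have inj: "inj_on ((!) s) ?S" using invol_nth_inj[OF ip] ls by (intro inj_onI) auto
  have "(!) s ` ?S = {s!0+1..m}"
  proof
    show "(!) s ` ?S \<subseteq> {s!0+1..m}" using invol_nth_bounds[OF ip] ls by auto
    have set_s: "set s = {1..m}" using invol_iff[of s m] ip by (simp add: perms_def)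
    show "{s!0+1..m} \<subseteq> (!) s ` ?S"
    proof
      fix x assume x: "x \<in> {s!0+1..m}"
      hence "x \<in> set s" using set_s by auto
      then obtain l where l: "l < length s" "s!l = x" by (auto simp: in_set_conv_nth)
      moreover have "s!0 < x" using x by simp
      moreover hence "l \<noteq> 0" using l(2) by (cases l) auto
      ultimately show "x \<in> (!) s ` ?S" by (intro image_eqI[of _ _ l]) auto
    qed
  qed
  hence "larger_after s 0 = card {s!0+1..m}"
    unfolding larger_after_def using card_image[OF inj] by simp
  thus ?thesis by simp
qed

lemma F_head_less_earlier:
  assumes ip: "invol m s" and av: "A_free k s" and b: "F_head k s j" and ij: "i < j" and jm: "j < m"
  shows "s!j < s!i"
proof -
  have "\<not> s!i < s!j" using av b ij jm invol_length[OF ip] unfolding A_free_def by blast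
  moreover have "s!i \<noteq> s!j" using invol_nth_inj[OF ip, of i j] ij jm by auto
  ultimately show ?thesis by simp
qed

text \<open>The F-heads of an A-free involution lie before the position holding 1, which is s!0 - 1.\<close>

lemma F_head_bounds:
  assumes ip: "invol m s" and av: "A_free k s" and b: "F_head k s j" and jm: "j < m"
  shows "s!j \<le> s!0 \<and> j + 1 \<le> s!0"
proof
  show "s!j \<le> s!0" using F_head_less_earlier[OF ip av b _ jm, of 0] by (cases "j = 0") auto
  have one: "s!(s!0 - 1) = 1" using invol_nth_nth[OF ip, of 0] jm by simp
  show "j + 1 \<le> s!0"
  proof (rule ccontr)
    assume "\<not> j + 1 \<le> s!0"
    hence "s!0 - 1 < j" using invol_nth_bounds[OF ip, of 0] jm by linarith
    hence "s!j < s!(s!0 - 1)" by (rule F_head_less_earlier[OF ip av b _ jm])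
    thus False using one invol_nth_bounds[OF ip jm] by simp
  qed
qed

lemma cycle_ok_of_first_small:
  assumes "invol m s" "A_free k s" "s!0 + 2 \<le> t"
  shows "cycle_ok k t s"
  using F_head_bounds[OF assms(1,2)] invol_length[OF assms(1)] assms(3)
  unfolding cycle_ok_def by fastforce

lemma cycle_ok_iff_first_small:
  assumes ip: "invol m s" and av: "A_free k s" and m1: "1 \<le> m" and sk: "s!0 + k \<le> m + 2"
  shows "cycle_ok k t s \<longleftrightarrow> s!0 + 2 \<le> t"
proof
  have "F_head k s 0" using larger_after_first[OF ip m1] sk unfolding F_head_def by simp
  moreover assume "cycle_ok k t s"
  ultimately show "s!0 + 2 \<le> t" using m1 invol_length[OF ip] unfolding cycle_ok_def by auto
qed (rule cycle_ok_of_first_small[OF ip av])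

lemma cycle_ok_large:
  assumes "invol m s" "m + 2 \<le> t"
  shows "cycle_ok k t s"
  using invol_nth_bounds[OF assms(1)] invol_length[OF assms(1)] assms(2)
  unfolding cycle_ok_def by fastforce

text \<open>An F-head of u is followed by k - 2 larger entries, which bounds both its position and
  its value.\<close>

lemma cycle_ok_high:
  assumes ip: "invol (m-2) u" and k3: "3 \<le> k" and high: "m + 3 \<le> t + k"
  shows "cycle_ok k t u"
  unfolding cycle_ok_def
proof (intro allI impI)
  fix j assume j: "j < length u" and "F_head k u j"
  hence "k - 2 \<le> larger_after u j" unfolding F_head_def by simp
  moreover have "larger_after u j + u!j \<le> m - 2"
    using larger_after_le_val[OF ip] j invol_length[OF ip] by simp
  moreover have "larger_after u j + j + 1 \<le> m - 2"
    using larger_after_le_pos[OF j] invol_length[OF ip] by simp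
  ultimately show "u!j + 2 \<le> t \<and> j + 3 \<le> t" using high k3 by linarith
qed

text \<open>When p!0 = t is so large that fewer than k - 2 values exceed it, deleting the cycle (1 t)
  from p affects neither A-freeness nor, up to a shift of the threshold, cycle_ok.\<close>

locale high_first_cycle = first_cycle +
  fixes k :: nat
  assumes high: "n + 3 \<le> t + k" and k3: "3 \<le> k"
begin

lemma A_free_iff_remove_cycle: "A_free k p \<longleftrightarrow> A_free k (remove_cycle t p)"
  using A_free_remove_cycle_iff cycle_ok_high[OF invol_remove_cycle k3 high] by blast

lemma not_F_head_first: "\<not> F_head k p 0"
  using larger_after_first[OF ip] p0 t2 tn high k3 unfolding F_head_def by simp

lemma not_F_head_last: "\<not> F_head k p (t-1)"
proof -
  have "larger_after p (t-1) + t \<le> n" using larger_after_le_pos[of "t-1" p] length_p t2 tn by simp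
  thus ?thesis using high k3 unfolding F_head_def by linarith
qed

lemma F_head_remove_cycle_shift:
  assumes j: "j < n - 2" and b: "F_head k (remove_cycle t p) j"
  shows "lift_pos t j = j + 1" "p!(j+1) = remove_cycle t p ! j + 1"
    "j + 3 \<le> t" "remove_cycle t p ! j + 2 \<le> t"
proof -
  have "j < length (remove_cycle t p)" using j length_remove_cycle by simp
  hence ok: "remove_cycle t p ! j + 2 \<le> t \<and> j + 3 \<le> t"
    using cycle_ok_high[OF invol_remove_cycle k3 high] b unfolding cycle_ok_def by blast
  thus "lift_pos t j = j + 1" "j + 3 \<le> t" "remove_cycle t p ! j + 2 \<le> t"
    unfolding lift_pos_def by simp_all
  thus "p!(j+1) = remove_cycle t p ! j + 1"
    using nth_lift_pos[OF j] ok unfolding lift_val_def by simp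
qed

lemma cycle_ok_iff_remove_cycle:
  assumes r3: "3 \<le> r"
  shows "cycle_ok k r p \<longleftrightarrow> cycle_ok k (r-1) (remove_cycle t p)"
proof
  assume ok: "cycle_ok k r p"
  show "cycle_ok k (r-1) (remove_cycle t p)" unfolding cycle_ok_def
  proof (intro allI impI)
    fix j assume "j < length (remove_cycle t p)" and b: "F_head k (remove_cycle t p) j"
    hence j: "j < n - 2" using length_remove_cycle by simp
    note shift = F_head_remove_cycle_shift[OF j b]
    have "F_head k p (j+1)" using F_head_remove_cycle[OF j] b shift(1) by simp
    moreover have "j + 1 < length p" using j length_p by simp
    ultimately have "p!(j+1) + 2 \<le> r \<and> j + 1 + 3 \<le> r" using ok unfolding cycle_ok_def by blast
    thus "remove_cycle t p ! j + 2 \<le> r - 1 \<and> j + 3 \<le> r - 1" using shift(2) by linarith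
  qed
next
  assume ok: "cycle_ok k (r-1) (remove_cycle t p)"
  show "cycle_ok k r p" unfolding cycle_ok_def
  proof (intro allI impI)
    fix l assume "l < length p" and b: "F_head k p l"
    moreover have "l \<noteq> 0" using b not_F_head_first by metis
    moreover have "l \<noteq> t - 1" using b not_F_head_last by metis
    ultimately obtain j where j: "j < n - 2" "l = lift_pos t j"
      using obtain_lift_pos length_p by metis
    have bj: "F_head k (remove_cycle t p) j" using F_head_remove_cycle[OF j(1)] b j(2) by simp
    note shift = F_head_remove_cycle_shift[OF j(1) bj]
    have "remove_cycle t p ! j + 2 \<le> r - 1 \<and> j + 3 \<le> r - 1"
      using ok bj j(1) length_remove_cycle unfolding cycle_ok_def by simp
    moreover have "l = j + 1" "p!l = remove_cycle t p ! j + 1" using shift j(2) by simp_all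
    ultimately show "p!l + 2 \<le> r \<and> l + 3 \<le> r" using r3 by linarith
  qed
qed

end

lemma card_first_high:
  assumes k3: "3 \<le> k" and s2: "2 \<le> s" and sm: "s \<le> m" and high: "m + 3 \<le> s + k" and r3: "3 \<le> r"
  shows "card {p. invol m p \<and> A_free k p \<and> cycle_ok k r p \<and> p!0 = s}
       = card {u. invol (m-2) u \<and> A_free k u \<and> cycle_ok k (r-1) u}"
proof -
  have "{p. invol m p \<and> A_free k p \<and> cycle_ok k r p \<and> p!0 = s}
      = {p \<in> {p. invol m p \<and> p!0 = s}. A_free k p \<and> cycle_ok k r p}" by blast
  also have "card \<dots> = card {u \<in> {u. invol (m-2) u}. A_free k u \<and> cycle_ok k (r-1) u}"
  proof (rule card_filter_bij_betw[OF remove_cycle_bij[OF s2 sm]], intro ballI)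
    fix p assume "p \<in> {p. invol m p \<and> p!0 = s}"
    hence "high_first_cycle m s p k" using s2 sm high k3
      by (intro high_first_cycle.intro first_cycle.intro high_first_cycle_axioms.intro) auto
    thus "(A_free k p \<and> cycle_ok k r p)
        = (A_free k (remove_cycle s p) \<and> cycle_ok k (r-1) (remove_cycle s p))"
      using high_first_cycle.A_free_iff_remove_cycle high_first_cycle.cycle_ok_iff_remove_cycle[OF _ r3]
      by blast
  qed
  finally show ?thesis by simp
qed

lemma card_first_low:
  assumes k3: "3 \<le> k" and s1: "1 \<le> s" and sm: "s \<le> m" and low: "\<not> (2 \<le> s \<and> m + 3 \<le> s + k)"
    and r3: "3 \<le> r"
  shows "card {p. invol m p \<and> A_free k p \<and> cycle_ok k r p \<and> p!0 = s}
       = (if s + 2 \<le> r then gt k m s else 0)"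
proof -
  have "cycle_ok k r p \<longleftrightarrow> s + 2 \<le> r" if "invol m p" "A_free k p" "p!0 = s" for p
  proof (cases "s + k \<le> m + 2")
    case True
    thus ?thesis using cycle_ok_iff_first_small[OF that(1,2)] that(3) s1 sm by simp
  next
    case False
    hence "s = 1" "m + 2 \<le> k" using low s1 by auto
    thus ?thesis using not_F_head_short[of p k] invol_length[OF that(1)] r3
      unfolding cycle_ok_def by auto
  qed
  hence "{p. invol m p \<and> A_free k p \<and> cycle_ok k r p \<and> p!0 = s}
      = (if s + 2 \<le> r then {p. invol m p \<and> A_free k p \<and> p!0 = s} else {})" by auto
  thus ?thesis using gt_eq_card[OF k3] by simp
qed

lemma gt_eq_sum_first:
  assumes k3: "3 \<le> k" and m1: "1 \<le> m" and r2: "2 \<le> r" and r: "r \<le> m + 2"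
  shows "gt k (m+2) r = (\<Sum>s=1..m. card {p. invol m p \<and> A_free k p \<and> cycle_ok k r p \<and> p!0 = s})"
proof -
  let ?A = "{p. invol m p \<and> A_free k p \<and> cycle_ok k r p}"
  have "finite ?A" using finite_invol[of m] by (rule rev_finite_subset) blast
  moreover have "\<forall>p\<in>?A. p!0 \<in> {1..m}" using invol_nth_bounds[of m _ 0] m1 by auto
  ultimately have "card ?A = (\<Sum>s=1..m. card {p\<in>?A. p!0 = s})"
    by (rule card_eq_sum_card_fibres[OF _ finite_atLeastAtMost])
  thus ?thesis using gt_eq_card_cycle_ok[OF k3 r2, of "m+2"] r by (simp add: conj_assoc)
qed

lemma g_eq_sum_gt:
  assumes k3: "3 \<le> k" and m1: "1 \<le> m"
  shows "g k m = (\<Sum>s=1..m. gt k m s)"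
proof -
  let ?A = "{p. invol m p \<and> A_free k p}"
  have "finite ?A" using finite_invol[of m] by (rule rev_finite_subset) blast
  moreover have "\<forall>p\<in>?A. p!0 \<in> {1..m}" using invol_nth_bounds[of m _ 0] m1 by auto
  ultimately have "card ?A = (\<Sum>s=1..m. card {p\<in>?A. p!0 = s})"
    by (rule card_eq_sum_card_fibres[OF _ finite_atLeastAtMost])
  thus ?thesis using g_eq_card[OF k3] gt_eq_card[OF k3] by (simp add: conj_assoc)
qed

lemma gt_first_high:
  assumes k3: "3 \<le> k" and s2: "2 \<le> s" and sm: "s \<le> m" and high: "m + 3 \<le> s + k"
  shows "gt k m s = g k (m-2)"
proof -
  have "{u. invol (m-2) u \<and> A_free k u \<and> cycle_ok k s u} = {u. invol (m-2) u \<and> A_free k u}"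
    using cycle_ok_high[OF _ k3 high] by blast
  thus ?thesis using gt_eq_card_cycle_ok[OF k3 s2 sm] g_eq_card[OF k3] by simp
qed

lemma card_cycle_ok_large:
  assumes k3: "3 \<le> k" and mr: "m \<le> r" and m2: "2 \<le> m"
  shows "card {u. invol (m-2) u \<and> A_free k u \<and> cycle_ok k r u} = g k (m-2)"
proof -
  have "{u. invol (m-2) u \<and> A_free k u \<and> cycle_ok k r u} = {u. invol (m-2) u \<and> A_free k u}"
    using cycle_ok_large[of "m-2" _ r k] mr m2 by auto
  thus ?thesis using g_eq_card[OF k3] by simp
qed

lemma G_split_first_two:
  fixes v :: real
  assumes "2 \<le> n"
  shows "G k n v = real (gt k n 1) + v * real (gt k n 2) + (\<Sum>t=3..n. real (gt k n t) * v^(t-1))"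
proof -
  have "{1..n} = insert 1 (insert 2 {3..n})" using assms by auto
  thus ?thesis unfolding G_def by (simp add: mult.commute)
qed

definition high_firsts :: "nat \<Rightarrow> nat \<Rightarrow> nat set" where
  "high_firsts k m = {s. 2 \<le> s \<and> s \<le> m \<and> m + 3 \<le> s + k}"

text \<open>first_count k m s t is the number of A_k-avoiding involutions of [m+2] starting with t whose
  reduced involution starts with s; s is high when the locale high_first_cycle applies to it.\<close>

definition first_count :: "nat \<Rightarrow> nat \<Rightarrow> nat \<Rightarrow> nat \<Rightarrow> nat" where
  "first_count k m s t =
     (if s \<in> high_firsts k m then (if t \<le> m + 1 then gt k m (t-1) else g k (m-2))
      else if s + 2 \<le> t then gt k m s else 0)"

definition high_series :: "nat \<Rightarrow> nat \<Rightarrow> real \<Rightarrow> real" where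
  "high_series k m v = (\<Sum>i=2..m. real (gt k m i) * v^i) + real (g k (m-2)) * v^(m+1)"

definition high_correction :: "nat \<Rightarrow> nat \<Rightarrow> real \<Rightarrow> real" where
  "high_correction k m v = (\<Sum>s\<in>high_firsts k m.
     (1 - v) * high_series k m v - real (g k (m-2)) * (v^(s+1) - v^(m+2)))"

lemma card_first_eq_first_count:
  assumes k3: "3 \<le> k" and t3: "3 \<le> t" and tm: "t \<le> m + 2" and s1: "1 \<le> s" and sm: "s \<le> m"
  shows "card {p. invol m p \<and> A_free k p \<and> cycle_ok k t p \<and> p!0 = s} = first_count k m s t"
proof (cases "s \<in> high_firsts k m")
  case True
  hence s2: "2 \<le> s" and high: "m + 3 \<le> s + k" by (auto simp: high_firsts_def)
  show ?thesis
  proof (cases "t \<le> m + 1")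
    case True
    thus ?thesis using card_first_high[OF k3 s2 sm high t3] gt_eq_card_cycle_ok[OF k3, of "t-1" m] t3
        \<open>s \<in> high_firsts k m\<close> by (simp add: first_count_def)
  next
    case False
    thus ?thesis using card_first_high[OF k3 s2 sm high t3] card_cycle_ok_large[OF k3, of m "t-1"]
        s2 sm \<open>s \<in> high_firsts k m\<close> by (simp add: first_count_def)
  qed
next
  case False
  hence "\<not> (2 \<le> s \<and> m + 3 \<le> s + k)" using sm by (auto simp: high_firsts_def)
  thus ?thesis using card_first_low[OF k3 s1 sm _ t3] False by (simp add: first_count_def)
qed

lemma series_first_count_low:
  fixes v :: real
  assumes s1: "1 \<le> s" and sm: "s \<le> m" and low: "s \<notin> high_firsts k m"
  shows "(1 - v) * (\<Sum>t=3..m+2. real (first_count k m s t) * v^(t-1))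
       = real (gt k m s) * (v^(s+1) - v^(m+2))"
proof -
  have "(\<Sum>t=3..m+2. real (first_count k m s t) * v^(t-1))
      = (\<Sum>t=3..m+2. if s + 2 \<le> t then real (gt k m s) * v^(t-1) else 0)"
    by (rule sum.cong) (auto simp: first_count_def low)
  also have "\<dots> = (\<Sum>t\<in>{t\<in>{3..m+2}. s + 2 \<le> t}. real (gt k m s) * v^(t-1))"
    by (rule sum.inter_filter[symmetric]) simp
  also have "{t\<in>{3..m+2}. s + 2 \<le> t} = {s+2..m+2}" using s1 by auto
  finally have "(\<Sum>t=3..m+2. real (first_count k m s t) * v^(t-1))
      = real (gt k m s) * (\<Sum>t=s+2..m+2. v^(t-1))" by (simp only: sum_distrib_left)
  moreover have "(1 - v) * (\<Sum>t=s+2..m+2. v^(t-1)) = v^(s+1) - v^(m+2)"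
    using geometric_sum_shifted[of "s+2" "m+2" v] sm by simp
  ultimately show ?thesis by (simp add: mult.left_commute)
qed

lemma series_first_count_high:
  fixes v :: real
  assumes high: "s \<in> high_firsts k m"
  shows "(\<Sum>t=3..m+2. real (first_count k m s t) * v^(t-1)) = high_series k m v"
proof -
  have m2: "2 \<le> m" using high by (auto simp: high_firsts_def)
  have "(\<Sum>t=3..m+2. real (first_count k m s t) * v^(t-1))
      = (\<Sum>t=Suc 2..Suc m. real (gt k m (t-1)) * v^(t-1)) + real (g k (m-2)) * v^(m+1)"
    using m2 high by (simp add: sum.cl_ivl_Suc first_count_def)
  also have "(\<Sum>t=Suc 2..Suc m. real (gt k m (t-1)) * v^(t-1)) = (\<Sum>i=2..m. real (gt k m i) * v^i)"
    unfolding sum.shift_bounds_cl_Suc_ivl by simp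
  finally show ?thesis by (simp add: high_series_def)
qed

lemma series_first_count:
  fixes v :: real
  assumes k3: "3 \<le> k" and s: "s \<in> {1..m}"
  shows "(1 - v) * (\<Sum>t=3..m+2. real (first_count k m s t) * v^(t-1))
       = real (gt k m s) * (v^(s+1) - v^(m+2))
       + (if s \<in> high_firsts k m
          then (1 - v) * high_series k m v - real (g k (m-2)) * (v^(s+1) - v^(m+2)) else 0)"
proof (cases "s \<in> high_firsts k m")
  case True
  hence "gt k m s = g k (m-2)" using gt_first_high[OF k3] by (simp add: high_firsts_def)
  thus ?thesis using series_first_count_high[OF True] True by simp
qed (use series_first_count_low s in simp)

lemma sum_gt_mult_power_diff:
  fixes v :: real
  assumes "3 \<le> k" "1 \<le> m"
  shows "(\<Sum>s=1..m. real (gt k m s) * (v^(s+1) - v^(m+2)))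
       = v^2 * G k m v - v^(m+2) * real (g k m)"
proof -
  have "(\<Sum>s=1..m. real (gt k m s) * (v^(s+1) - v^(m+2)))
      = (\<Sum>s=1..m. v^2 * (real (gt k m s) * v^(s-1)) - v^(m+2) * real (gt k m s))"
  proof (rule sum.cong)
    fix s assume "s \<in> {1..m}"
    hence "v^(s+1) = v^2 * v^(s-1)" by (simp flip: power_add)
    thus "real (gt k m s) * (v^(s+1) - v^(m+2))
        = v^2 * (real (gt k m s) * v^(s-1)) - v^(m+2) * real (gt k m s)"
      by (simp add: algebra_simps)
  qed simp
  also have "\<dots> = v^2 * (\<Sum>s=1..m. real (gt k m s) * v^(s-1)) - v^(m+2) * (\<Sum>s=1..m. real (gt k m s))"
    by (simp only: sum_subtractf sum_distrib_left)
  finally show ?thesis using g_eq_sum_gt[OF assms] by (simp add: G_def of_nat_sum)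
qed

lemma series_gt_tail:
  fixes v :: real
  assumes k3: "3 \<le> k" and m1: "1 \<le> m"
  shows "(1 - v) * (\<Sum>t=3..m+2. real (gt k (m+2) t) * v^(t-1))
       = v^2 * G k m v - v^(m+2) * real (g k m) + high_correction k m v"
proof -
  let ?H = "high_firsts k m"
  have "real (gt k (m+2) t) = (\<Sum>s=1..m. real (first_count k m s t))" if "t \<in> {3..m+2}" for t
    using gt_eq_sum_first[OF k3 m1, of t] card_first_eq_first_count[OF k3, of t m] that
    by (simp add: of_nat_sum)
  hence "(\<Sum>t=3..m+2. real (gt k (m+2) t) * v^(t-1))
      = (\<Sum>t=3..m+2. (\<Sum>s=1..m. real (first_count k m s t)) * v^(t-1))"
    by (intro sum.cong) simp_all
  also have "\<dots> = (\<Sum>s=1..m. \<Sum>t=3..m+2. real (first_count k m s t) * v^(t-1))"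
    unfolding sum_distrib_right by (rule sum.swap)
  finally have "(1 - v) * (\<Sum>t=3..m+2. real (gt k (m+2) t) * v^(t-1))
      = (\<Sum>s=1..m. (1 - v) * (\<Sum>t=3..m+2. real (first_count k m s t) * v^(t-1)))"
    by (simp only: sum_distrib_left)
  also have "\<dots> = (\<Sum>s=1..m. real (gt k m s) * (v^(s+1) - v^(m+2)))
      + (\<Sum>s=1..m. if s \<in> ?H
          then (1 - v) * high_series k m v - real (g k (m-2)) * (v^(s+1) - v^(m+2)) else 0)"
    unfolding sum.distrib[symmetric] using series_first_count[OF k3] by (intro sum.cong) simp_all
  also have "(\<Sum>s=1..m. if s \<in> ?H
          then (1 - v) * high_series k m v - real (g k (m-2)) * (v^(s+1) - v^(m+2)) else 0)
      = high_correction k m v"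
  proof -
    have "{s\<in>{1..m}. s \<in> ?H} = ?H" by (auto simp: high_firsts_def)
    thus ?thesis
      unfolding high_correction_def sum.inter_filter[OF finite_atLeastAtMost, symmetric] by simp
  qed
  finally show ?thesis using sum_gt_mult_power_diff[OF k3 m1] by simp
qed

lemma high_series_eq:
  fixes v :: real
  assumes "1 \<le> m"
  shows "high_series k m v = v * (G k m v - real (gt k m 1)) + real (g k (m-2)) * v^(m+1)"
proof -
  have "G k m v = real (gt k m 1) + (\<Sum>s=Suc 1..m. real (gt k m s) * v^(s-1))"
    unfolding G_def by (subst sum.atLeast_Suc_atMost[OF assms]) simp
  hence "v * (G k m v - real (gt k m 1)) = (\<Sum>s=2..m. v * (real (gt k m s) * v^(s-1)))"
    by (simp add: sum_distrib_left numeral_2_eq_2)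
  also have "\<dots> = (\<Sum>s=2..m. real (gt k m s) * v^s)"
    by (rule sum.cong) (auto simp: power_eq_if)
  finally show ?thesis by (simp add: high_series_def)
qed

lemma high_correction_split:
  "high_correction k m v = real (card (high_firsts k m))
      * ((1 - v) * high_series k m v + real (g k (m-2)) * v^(m+2))
    - real (g k (m-2)) * (\<Sum>s\<in>high_firsts k m. v^(s+1))"
  unfolding high_correction_def
  by (simp add: algebra_simps sum_subtractf sum.distrib sum_distrib_left)

lemma correction_factor_eq:
  fixes v :: real
  assumes "v \<noteq> 0" "v \<noteq> 1" "k \<le> m + 4"
  shows "v^(m+1) * (c + (v - v powi (3 - int k)) / (1 - v))
       = c * v^(m+1) + (v^(m+2) - v^(m+4-k)) / (1 - v)"
proof -
  have "1 - v \<noteq> 0" using assms(2) by simp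
  thus ?thesis using power_mult_power_int_three_minus[OF assms(1,3)]
    by (simp add: field_simps)
qed

lemma high_correction_eq_k_le:
  fixes v :: real
  assumes k3: "3 \<le> k" and km: "k \<le> m + 1" and v0: "v \<noteq> 0" and v1: "v \<noteq> 1"
  shows "high_correction k m v = real (k-2) * (1 - v) * v * (G k m v - real (gt k m 1))
       + v^(m+1) * (real (k-2) + (v - v powi (3 - int k)) / (1 - v)) * real (g k (m-2))"
proof -
  let ?h = "real (g k (m-2))" and ?D = "G k m v - real (gt k m 1)"
  have H: "high_firsts k m = {m+3-k..m}" using k3 km by (auto simp: high_firsts_def)
  have "(1 - v) * (\<Sum>s\<in>high_firsts k m. v^(s+1)) = v * ((1 - v) * (\<Sum>s=m+3-k..m. v^s))"
    unfolding H by (simp add: sum_distrib_left algebra_simps)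
  also have "\<dots> = v * (v^(m+3-k) - v^Suc m)" using k3 by (subst sum_gp_multiplied) simp_all
  also have "\<dots> = v^Suc (m+3-k) - v^(m+2)" by (simp add: algebra_simps)
  also have "Suc (m+3-k) = m+4-k" using km by simp
  moreover have "1 - v \<noteq> 0" using v1 by simp
  ultimately have P: "(\<Sum>s\<in>high_firsts k m. v^(s+1)) = (v^(m+4-k) - v^(m+2)) / (1 - v)"
    by (simp add: field_simps)
  have "card (high_firsts k m) = k - 2" using H k3 km by simp
  hence "high_correction k m v
      = real (k-2) * ((1 - v) * (v * ?D + ?h * v^(m+1)) + ?h * v^(m+2))
        - ?h * ((v^(m+4-k) - v^(m+2)) / (1 - v))"
    using high_correction_split[of k m v] high_series_eq[of m k v] P k3 km by simp
  also have "\<dots> = real (k-2) * (1 - v) * v * ?D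
      + (real (k-2) * v^(m+1) + (v^(m+2) - v^(m+4-k)) / (1 - v)) * ?h"
    using v1 by (simp add: field_simps)
  finally show ?thesis using correction_factor_eq[OF v0 v1, of k m "real (k-2)"] km by simp
qed

lemma high_correction_eq_k_eq:
  fixes v :: real
  assumes k: "k = m + 2" and m2: "2 \<le> m" and v0: "v \<noteq> 0" and v1: "v \<noteq> 1"
  shows "high_correction k m v = real (k-2) * (1 - v) * v * (G k m v - real (gt k m 1))
       + v^(m+1) * (real (k-2) + (v - v powi (3 - int k)) / (1 - v)) * real (g k (m-2))"
proof -
  let ?h = "real (g k (m-2))"
  define R where "R = (\<Sum>s=2..m. v^(s-1))"
  have H: "high_firsts k m = {2..m}" using k by (auto simp: high_firsts_def)
  have "1 - v \<noteq> 0" using v1 by simp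
  moreover have "(1 - v) * R = v - v^m" unfolding R_def using geometric_sum_shifted[of 2 m v] m2 by simp
  ultimately have R: "R = (v - v^m) / (1 - v)" by (simp add: field_simps)
  have "G k m v - real (gt k m 1) = (\<Sum>s=2..m. real (gt k m s) * v^(s-1))"
    unfolding G_def using m2 by (subst sum.atLeast_Suc_atMost) (simp_all add: numeral_2_eq_2)
  also have "\<dots> = ?h * R"
    unfolding R_def sum_distrib_left using gt_first_high[of k _ m] k m2 by (intro sum.cong) auto
  finally have D: "G k m v - real (gt k m 1) = ?h * R" .
  have P: "(\<Sum>s\<in>high_firsts k m. v^(s+1)) = v^2 * R"
    unfolding H R_def sum_distrib_left by (rule sum.cong) (auto simp flip: power_add)
  have "card (high_firsts k m) = m - 1" using H by simp
  hence "high_correction k m v = real (m-1) * ((1 - v) * (v * (?h * R) + ?h * v^(m+1)) + ?h * v^(m+2))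
      - ?h * (v^2 * R)"
    using high_correction_split[of k m v] high_series_eq[of m k v] D P m2 by simp
  also have "\<dots> = real (k-2) * (1 - v) * v * (?h * R)
      + (real (k-2) * v^(m+1) + (v^(m+2) - v^2) / (1 - v)) * ?h"
    using v1 m2 k unfolding R by (simp add: field_simps of_nat_diff power2_eq_square)
  finally show ?thesis using correction_factor_eq[OF v0 v1, of k m "real (k-2)"] D k by simp
qed

lemma high_correction_eq:
  fixes v :: real
  assumes k3: "3 \<le> k" and km: "k \<le> m + 2" and v0: "v \<noteq> 0" and v1: "v \<noteq> 1"
  shows "high_correction k m v = real (k-2) * (1 - v) * v * (G k m v - real (gt k m 1))
       + v^(m+1) * (real (k-2) + (v - v powi (3 - int k)) / (1 - v)) * real (gz k (int m - 2))"
proof (cases "k \<le> m + 1")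
  case True
  thus ?thesis using high_correction_eq_k_le[OF k3 True v0 v1] k3 by (simp add: gz_def nat_diff_distrib)
next
  case False
  hence k: "k = m + 2" using km by simp
  show ?thesis
  proof (cases "m = 1")
    case True
    have "high_firsts k m = {}" using True by (auto simp: high_firsts_def)
    moreover have "G k m v = real (gt k m 1)" using True by (simp add: G_def)
    ultimately show ?thesis using True by (simp add: high_correction_def gz_def)
  next
    case False
    hence "2 \<le> m" using k3 k by simp
    thus ?thesis using high_correction_eq_k_eq[OF k _ v0 v1] by (simp add: gz_def nat_diff_distrib)
  qed
qed

lemma G_recurrence:
  fixes v :: real
  assumes k3: "3 \<le> k" and nk: "k \<le> n" and v0: "v \<noteq> 0" and v1: "v \<noteq> 1"
  shows "G k n v = real (f (k-1) (n-1)) + v * real (f (k-1) (n-2))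
              - v * real (k-2) * real (f (k-1) (n-3))
              + (v^2 / (1 - v) + real (k-2) * v) * G k (n-2) v
              - v^n / (1 - v) * real (g k (n-2))
              + v^(n-1) / (1 - v) * (real (k-2) + (v - v powi (3 - int k)) / (1 - v))
                  * real (gz k (int n - 4))"
proof -
  define m where "m = n - 2"
  have n: "n = m + 2" and m1: "1 \<le> m" using k3 nk by (simp_all add: m_def)
  define S where "S = (\<Sum>t=3..m+2. real (gt k (m+2) t) * v^(t-1))"
  define C where "C = real (k-2) + (v - v powi (3 - int k)) / (1 - v)"
  have "G k n v = real (f (k-1) (m+1)) + v * real (f (k-1) m) + S"
    using G_split_first_two[of n k v] gt_one[OF k3, of "m+1"] gt_two[OF k3, of n] n
    by (simp add: S_def)
  moreover have "(1 - v) * S = v^2 * G k m v - v^(m+2) * real (g k m)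
      + real (k-2) * (1 - v) * v * (G k m v - real (f (k-1) (m-1)))
      + v^(m+1) * C * real (gz k (int m - 2))"
    using series_gt_tail[OF k3 m1, of v] high_correction_eq[OF k3 _ v0 v1, of m] gt_one[OF k3, of "m-1"]
      nk n m1 by (simp add: S_def C_def)
  moreover have "G = F1 + v * F2 - v * c * F3 + (v^2 / (1 - v) + c * v) * Gm
      - vn / (1 - v) * gm + vn1 / (1 - v) * C * z"
    if "G = F1 + v * F2 + S" and "(1 - v) * S = v^2 * Gm - vn * gm + c * (1 - v) * v * (Gm - F3) + vn1 * C * z"
    for G F1 F2 F3 S Gm gm z c vn vn1 :: real
  proof -
    define w where "w = 1 / (1 - v)"
    have "(1 - v) * w = 1" using v1 by (simp add: w_def)
    hence "G = F1 + v * F2 - v * c * F3 + (v^2 * w + c * v) * Gm - vn * w * gm + vn1 * w * C * z"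
      using that by algebra
    thus ?thesis by (simp add: w_def)
  qed
  ultimately have "G k n v = real (f (k-1) (m+1)) + v * real (f (k-1) m)
              - v * real (k-2) * real (f (k-1) (m-1))
              + (v^2 / (1 - v) + real (k-2) * v) * G k m v
              - v^(m+2) / (1 - v) * real (g k m)
              + v^(m+1) / (1 - v) * C * real (gz k (int m - 2))"
    by blast
  moreover have "int (m+2) - 4 = int m - 2" by simp
  ultimately show ?thesis unfolding C_def[symmetric] n by simp
qed

lemma G_initial:
  fixes v :: real
  assumes k3: "3 \<le> k" and n1: "1 \<le> n" and nk: "n \<le> k - 1" and v1: "v \<noteq> 1"
  shows "G k n v = real (Inv (n-1)) + (v - v^n) / (1 - v) * real (Inv (n-2))"
proof -
  have short: "\<not> F_head k s j" if "length s < n" "j < length s" for s j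
    using not_F_head_short[of s k j] that nk by simp
  have "{p. invol (n-1) p \<and> F_free k p} = {p. invol (n-1) p}"
    using short invol_length n1 by (auto simp: F_free_def)
  hence "gt k n 1 = Inv (n-1)" using gt_one[OF k3, of "n-1"] f_eq_card[OF k3] Inv_eq_card n1 by simp
  moreover have "gt k n t = Inv (n-2)" if "2 \<le> t" "t \<le> n" for t
  proof -
    have "{s. invol (n-2) s \<and> A_free k s \<and> cycle_ok k t s} = {s. invol (n-2) s}"
      using short invol_length that by (auto simp: A_free_def cycle_ok_def)
    thus ?thesis using gt_eq_card_cycle_ok[OF k3 that] Inv_eq_card by simp
  qed
  hence "(\<Sum>t=Suc 1..n. real (gt k n t) * v^(t-1)) = real (Inv (n-2)) * (\<Sum>t=2..n. v^(t-1))"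
    unfolding sum_distrib_left numeral_2_eq_2 by (intro sum.cong) simp_all
  moreover have "(\<Sum>t=2..n. v^(t-1)) = (v - v^n) / (1 - v)"
    using geometric_sum_shifted[of 2 n v] n1 v1 by (simp add: field_simps)
  ultimately show ?thesis
    unfolding G_def by (subst sum.atLeast_Suc_atMost[OF n1]) simp
qed

theorem lemma3p3:
  fixes k :: nat
  assumes "k \<ge> 3"
  shows "(\<forall>n \<ge> k. \<forall>v :: real. v \<noteq> 0 \<and> v \<noteq> 1 \<longrightarrow>
            G k n v = real (f (k-1) (n-1)) + v * real (f (k-1) (n-2))
              - v * real (k-2) * real (f (k-1) (n-3))
              + (v^2 / (1 - v) + real (k-2) * v) * G k (n-2) v
              - v^n / (1 - v) * real (g k (n-2))
              + v^(n-1) / (1 - v) * (real (k-2) + (v - v powi (3 - int k)) / (1 - v))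
                  * real (gz k (int n - 4)))
       \<and> (\<forall>n. 1 \<le> n \<and> n \<le> k - 1 \<longrightarrow> (\<forall>v :: real. v \<noteq> 1 \<longrightarrow>
            G k n v = real (Inv (n-1)) + (v - v^n) / (1 - v) * real (Inv (n-2))))"
  using G_recurrence[OF assms] G_initial[OF assms] by blast

end
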